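(* Let $k\ge 1$ and let $v_0,\pi_1,v_1,\dots,\pi_k$ be generated by Approximate Value Iteration with errors $\epsilon_1,\dots,\epsilon_{k-1}$, and $\epsilon=\max_{1\le j<k}\operatorname{span}(\epsilon_j)$ (with $\epsilon=0$ if $k=1$). Let $\pi_{k,k}$ be the periodic non-stationary policy $\pi_k\,\pi_{k-1}\cdots\pi_1\,\pi_k\,\pi_{k-1}\cdots\pi_1\cdots$. Then $$\|v_*-v_{\pi_{k,k}}\|_\infty \le \left(\frac{\gamma}{1-\gamma}-\frac{\gamma^k}{1-\gamma^k}\right)\epsilon+\frac{\gamma^k}{1-\gamma^k}\operatorname{span}(v_*-v_0).$$
   Context: A Markov Decision Process with finite state space $S$, finite action space $A$, reward function $r(s,a)$, transition probabilities $p(s'|s,a)$ and discount factor $\gamma\in[0,1)$. For a (deterministic, stationary) policy $\pi:S\to A$, let $r_\pi(s)=r(s,\pi(s))$, let $P_\pi$ be the stochastic matrix $P_\pi(s,s')=p(s'|s,\pi(s))$, and let $T_\pi v=r_\pi+\gamma P_\pi v$ be the Bellman operator of $\pi$; $v_\pi$ is its unique fixed point. The Bellman optimality operator is $Tv=\max_\pi T_\pi v$ (componentwise), $v_*$ is its fixed point (the optimal value), and a policy $\pi$ is greedy with respect to $v$ if $T_\pi v=Tv$. For $f:S\to\mathbb R$, $\operatorname{span}(f)=\max_s f(s)-\min_s f(s)$. Approximate Value Iteration: from arbitrary $v_0$, for $j\ge0$ pick any $\pi_{j+1}$ greedy w.r.t. $v_j$ and set $v_{j+1}=T_{\pi_{j+1}}v_j+\epsilon_{j+1}$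 with arbitrary errors $\epsilon_{j+1}:S\to\mathbb R$. A non-stationary policy $\sigma_0\sigma_1\cdots$ uses $\sigma_t$ at time $t$, with value $\sum_{t\ge0}\gamma^t P_{\sigma_0}\cdots P_{\sigma_{t-1}}r_{\sigma_t}$. *)

theory Defs
  imports "HOL-Analysis.Analysis"
begin

text \<open>Finite MDP: states of type 's::finite, actions of type 'a::finite,
  reward r s a, transition probabilities p s a s', discount g.
  Functions S -> R are represented as 's \<Rightarrow> real.\<close>

definition mdp :: "('s::finite \<Rightarrow> 'a::finite \<Rightarrow> real) \<Rightarrow> ('s \<Rightarrow> 'a \<Rightarrow> 's \<Rightarrow> real) \<Rightarrow> real \<Rightarrow> bool" where
  "mdp r p g \<longleftrightarrow> (\<forall>s a s'. 0 \<le> p s a s') \<and> (\<forall>s a. (\<Sum>s'\<in>UNIV. p s a s') = 1) \<and> 0 \<le> g \<and> g < 1"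

definition Pmat :: "('s::finite \<Rightarrow> 'a \<Rightarrow> 's \<Rightarrow> real) \<Rightarrow> ('s \<Rightarrow> 'a) \<Rightarrow> 's \<Rightarrow> 's \<Rightarrow> real" where
  "Pmat p \<pi> s s' = p s (\<pi> s) s'"

definition Tpol :: "('s::finite \<Rightarrow> 'a \<Rightarrow> real) \<Rightarrow> ('s \<Rightarrow> 'a \<Rightarrow> 's \<Rightarrow> real) \<Rightarrow> real \<Rightarrow> ('s \<Rightarrow> 'a) \<Rightarrow> ('s \<Rightarrow> real) \<Rightarrow> 's \<Rightarrow> real" where
  "Tpol r p g \<pi> v s = r s (\<pi> s) + g * (\<Sum>s'\<in>UNIV. Pmat p \<pi> s s' * v s')"

definition vpol :: "('s::finite \<Rightarrow> 'a \<Rightarrow> real) \<Rightarrow> ('s \<Rightarrow> 'a \<Rightarrow> 's \<Rightarrow> real) \<Rightarrow> real \<Rightarrow> ('s \<Rightarrow> 'a) \<Rightarrow> 's \<Rightarrow> real" where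
  "vpol r p g \<pi> = (THE v. Tpol r p g \<pi> v = v)"

definition Topt :: "('s::finite \<Rightarrow> 'a::finite \<Rightarrow> real) \<Rightarrow> ('s \<Rightarrow> 'a \<Rightarrow> 's \<Rightarrow> real) \<Rightarrow> real \<Rightarrow> ('s \<Rightarrow> real) \<Rightarrow> 's \<Rightarrow> real" where
  "Topt r p g v s = Max ((\<lambda>\<pi>. Tpol r p g \<pi> v s) ` UNIV)"

definition vopt :: "('s::finite \<Rightarrow> 'a::finite \<Rightarrow> real) \<Rightarrow> ('s \<Rightarrow> 'a \<Rightarrow> 's \<Rightarrow> real) \<Rightarrow> real \<Rightarrow> 's \<Rightarrow> real" where
  "vopt r p g = (THE v. Topt r p g v = v)"

definition greedy :: "('s::finite \<Rightarrow> 'a::finite \<Rightarrow> real) \<Rightarrow> ('s \<Rightarrow> 'a \<Rightarrow> 's \<Rightarrow> real) \<Rightarrow> real \<Rightarrow> ('s \<Rightarrow> 'a) \<Rightarrow> ('s \<Rightarrow> real) \<Rightarrow> bool" where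
  "greedy r p g \<pi> v \<longleftrightarrow> Tpol r p g \<pi> v = Topt r p g v"

definition span :: "('s::finite \<Rightarrow> real) \<Rightarrow> real" where
  "span f = Max (range f) - Min (range f)"

definition supnorm :: "('s::finite \<Rightarrow> real) \<Rightarrow> real" where
  "supnorm f = Max (range (\<lambda>s. \<bar>f s\<bar>))"

fun Pprod :: "('s::finite \<Rightarrow> 'a \<Rightarrow> 's \<Rightarrow> real) \<Rightarrow> (nat \<Rightarrow> 's \<Rightarrow> 'a) \<Rightarrow> nat \<Rightarrow> 's \<Rightarrow> 's \<Rightarrow> real" where
  "Pprod p \<sigma> 0 s s' = (if s = s' then 1 else 0)"
| "Pprod p \<sigma> (Suc t) s s' = (\<Sum>u\<in>UNIV. Pprod p \<sigma> t s u * Pmat p (\<sigma> t) u s')"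

definition vns :: "('s::finite \<Rightarrow> 'a \<Rightarrow> real) \<Rightarrow> ('s \<Rightarrow> 'a \<Rightarrow> 's \<Rightarrow> real) \<Rightarrow> real \<Rightarrow> (nat \<Rightarrow> 's \<Rightarrow> 'a) \<Rightarrow> 's \<Rightarrow> real" where
  "vns r p g \<sigma> s = (\<Sum>t. g ^ t * (\<Sum>s'\<in>UNIV. Pprod p \<sigma> t s s' * r s' (\<sigma> t s')))"

end

theory Submission
  imports Defs
begin

text \<open>
  Write \<open>w\<close> for the value of the periodic policy \<open>\<pi>\<^sub>k \<dots> \<pi>\<^sub>1 \<pi>\<^sub>k \<dots>\<close>.  The proof has
  three ingredients.
  (1) Every Bellman operator \<open>T\<^sub>\<pi>\<close>, and the optimality operator \<open>T\<close>, is a one-sided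
      \<open>g\<close>-contraction; this gives monotonicity, and the fixed point \<open>v\<^sub>*\<close> of \<open>T\<close> exists
      (Banach's iteration) and is unique.
  (2) The value of a non-stationary policy satisfies the Bellman equation
      \<open>v\<^bsub>\<sigma>\<^sub>0\<sigma>\<^sub>1\<dots>\<^esub> = T\<^bsub>\<sigma>\<^sub>0\<^esub> v\<^bsub>\<sigma>\<^sub>1\<dots>\<^esub>\<close>, so \<open>w\<close> is a fixed point of \<open>T\<^bsub>\<pi>\<^sub>k\<^esub> \<dots> T\<^bsub>\<pi>\<^sub>1\<^esub>\<close>.
      Since \<open>T\<^sub>\<pi> v\<^sub>* \<le> v\<^sub>*\<close>, any such fixed point lies below \<open>v\<^sub>*\<close>, hence
      \<open>\<parallel>v\<^sub>* - w\<parallel>\<^sub>\<infinity> = max (v\<^sub>* - w)\<close>.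
  (3) The quantity \<open>gap\<^sub>j = max (v\<^sub>* - v\<^sub>j) + max (v\<^sub>j - T\<^bsub>\<pi>\<^sub>j\<^esub> \<dots> T\<^bsub>\<pi>\<^sub>1\<^esub> w)\<close> satisfies
      \<open>gap\<^sub>j\<^sub>+\<^sub>1 \<le> g gap\<^sub>j + span \<epsilon>\<^sub>j\<^sub>+\<^sub>1\<close>, while \<open>max (v\<^sub>* - w) \<le> g gap\<^sub>k\<^sub>-\<^sub>1\<close> and
      \<open>gap\<^sub>0 \<le> span (v\<^sub>* - v\<^sub>0) + max (v\<^sub>* - w)\<close>.  Unrolling the recurrence gives a linear
      inequality for \<open>max (v\<^sub>* - w)\<close> whose solution is the stated bound.
\<close>

definition fmax :: "('s::finite \<Rightarrow> real) \<Rightarrow> real" where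
  "fmax f = Max (range f)"

definition fmin :: "('s::finite \<Rightarrow> real) \<Rightarrow> real" where
  "fmin f = Min (range f)"

lemma fmax_ge: "f s \<le> fmax (f :: 's::finite \<Rightarrow> real)"
  unfolding fmax_def by (rule Max_ge) auto

lemma fmax_leI: "(\<And>s. f s \<le> c) \<Longrightarrow> fmax (f :: 's::finite \<Rightarrow> real) \<le> c"
  unfolding fmax_def by (subst Max_le_iff) auto

lemma fmin_le: "fmin (f :: 's::finite \<Rightarrow> real) \<le> f s"
  unfolding fmin_def by (rule Min_le) auto

lemma fmin_attained: "\<exists>s. fmin (f :: 's::finite \<Rightarrow> real) = f s"
proof -
  have "Min (range f) \<in> range f" by (rule Min_in) auto
  then show ?thesis unfolding fmin_def by (metis rangeE)
qed

lemma span_fmax_fmin: "span f = fmax f - fmin f"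
  unfolding span_def fmax_def fmin_def ..

lemma supnorm_nonneg: "(\<And>s. 0 \<le> f s) \<Longrightarrow> supnorm f = fmax f"
  unfolding supnorm_def fmax_def by simp

section \<open>Bellman operators are one-sided contractions\<close>

text \<open>This single property gives monotonicity (\<open>c = 0\<close>), the two-sided sup-norm
  contraction, and hence existence and uniqueness of fixed points.\<close>
definition contracting :: "(('s::finite \<Rightarrow> real) \<Rightarrow> 's \<Rightarrow> real) \<Rightarrow> real \<Rightarrow> bool" where
  "contracting F g \<longleftrightarrow> (\<forall>x y c. (\<forall>s. x s - y s \<le> c) \<longrightarrow> (\<forall>s. F x s - F y s \<le> g * c))"

lemma contractingD:
  "contracting F g \<Longrightarrow> (\<And>s. x s - y s \<le> c) \<Longrightarrow> F x s - F y s \<le> g * c"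
  unfolding contracting_def by blast

lemma contractingD_lower:
  assumes "contracting F g" "\<And>s. c \<le> x s - y s"
  shows "g * c \<le> F x s - F y s"
proof -
  have "y s' - x s' \<le> - c" for s'
    using assms(2)[of s'] by linarith
  then have "F y s - F x s \<le> g * (- c)"
    by (rule contractingD[OF assms(1)])
  then show ?thesis by simp
qed

lemma contractingD_abs:
  assumes F: "contracting F g" and le: "\<And>s. \<bar>x s - y s\<bar> \<le> c"
  shows "\<bar>F x s - F y s\<bar> \<le> g * c"
proof -
  have "x s - y s \<le> c" "y s - x s \<le> c" for s
    using le[of s] by linarith+
  then have "F x s - F y s \<le> g * c" "F y s - F x s \<le> g * c"
    using contractingD[OF F, of x y c s] contractingD[OF F, of y x c s] by auto
  then show ?thesis by linarith
qed

text \<open>Policy evaluation: \<open>T\<^sub>\<pi>\<close> averages with a stochastic row and discounts by \<open>g\<close>.\<close>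
lemma Tpol_contracting:
  fixes r :: "'s::finite \<Rightarrow> 'a::finite \<Rightarrow> real"
  assumes "mdp r p g"
  shows "contracting (Tpol r p g \<pi>) g"
  unfolding contracting_def
proof (intro allI impI)
  fix x y :: "'s \<Rightarrow> real" and c s
  assume le: "\<forall>s. x s - y s \<le> c"
  have P0: "\<And>s'. 0 \<le> Pmat p \<pi> s s'" and P1: "(\<Sum>s'\<in>UNIV. Pmat p \<pi> s s') = 1"
    and g0: "0 \<le> g"
    using assms unfolding mdp_def Pmat_def by auto
  have "(\<Sum>s'\<in>UNIV. Pmat p \<pi> s s' * x s') - (\<Sum>s'\<in>UNIV. Pmat p \<pi> s s' * y s')
      = (\<Sum>s'\<in>UNIV. Pmat p \<pi> s s' * (x s' - y s'))"
    by (simp add: sum_subtractf right_diff_distrib)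
  also have "\<dots> \<le> (\<Sum>s'\<in>UNIV. Pmat p \<pi> s s' * c)"
    using le P0 by (intro sum_mono mult_left_mono) auto
  also have "\<dots> = c"
    using P1 by (simp add: sum_distrib_right[symmetric])
  finally have "g * ((\<Sum>s'\<in>UNIV. Pmat p \<pi> s s' * x s') - (\<Sum>s'\<in>UNIV. Pmat p \<pi> s s' * y s')) \<le> g * c"
    using g0 by (rule mult_left_mono)
  then show "Tpol r p g \<pi> x s - Tpol r p g \<pi> y s \<le> g * c"
    unfolding Tpol_def by (simp add: right_diff_distrib)
qed

lemma Topt_ge: "Tpol r p g \<pi> x s \<le> Topt r p g x s"
  unfolding Topt_def by (rule Max_ge) auto

lemma Topt_attained: "\<exists>\<pi>. Topt r p g x s = Tpol r p g \<pi> x s"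
proof -
  have "Topt r p g x s \<in> (\<lambda>\<pi>. Tpol r p g \<pi> x s) ` UNIV"
    unfolding Topt_def by (rule Max_in) auto
  then show ?thesis by auto
qed

text \<open>The optimality operator inherits the contraction property: compare \<open>T x\<close>
  with \<open>T\<^sub>\<pi> y\<close> for a policy \<open>\<pi>\<close> attaining the maximum at \<open>x\<close>.\<close>
lemma Topt_contracting:
  fixes r :: "'s::finite \<Rightarrow> 'a::finite \<Rightarrow> real"
  assumes "mdp r p g"
  shows "contracting (Topt r p g) g"
  unfolding contracting_def
proof (intro allI impI)
  fix x y :: "'s \<Rightarrow> real" and c s
  assume le: "\<forall>s. x s - y s \<le> c"
  obtain \<pi> where \<pi>: "Topt r p g x s = Tpol r p g \<pi> x s"
    using Topt_attained by blast
  have "Tpol r p g \<pi> x s - Tpol r p g \<pi> y s \<le> g * c"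
    using contractingD[OF Tpol_contracting[OF assms]] le by blast
  then show "Topt r p g x s - Topt r p g y s \<le> g * c"
    using \<pi> Topt_ge[of r p g \<pi> y s] by linarith
qed

section \<open>Fixed points of contracting operators\<close>

text \<open>Two fixed points \<open>x, y\<close> satisfy \<open>max (x - y) \<le> g max (x - y)\<close>, so \<open>x \<le> y\<close>,
  and symmetrically.\<close>
lemma contracting_fixpoint_unique:
  fixes F :: "('s::finite \<Rightarrow> real) \<Rightarrow> 's \<Rightarrow> real"
  assumes F: "contracting F g" and g1: "g < 1" and x: "F x = x" and y: "F y = y"
  shows "x = y"
proof -
  have le: "x \<le> y" if Fx: "F x = x" and Fy: "F y = y" for x y :: "'s \<Rightarrow> real"
  proof -
    define c where "c = fmax (\<lambda>s. x s - y s)"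
    have c: "x s - y s \<le> c" for s
      unfolding c_def by (rule fmax_ge)
    have "x s - y s \<le> g * c" for s
      using contractingD[OF F, of x y c s] c Fx Fy by simp
    then have "c \<le> g * c"
      unfolding c_def by (rule fmax_leI)
    then have "c * (1 - g) \<le> 0"
      by (simp add: algebra_simps)
    with g1 have "c \<le> 0"
      by (simp add: mult_le_0_iff)
    show "x \<le> y"
    proof (rule le_funI)
      fix s
      show "x s \<le> y s" using c[of s] \<open>c \<le> 0\<close> by linarith
    qed
  qed
  show ?thesis
    using le[OF x y] le[OF y x] by (rule antisym)
qed

lemma contracting_tendsto:
  fixes F :: "('s::finite \<Rightarrow> real) \<Rightarrow> 's \<Rightarrow> real"
  assumes F: "contracting F g" and lim: "\<And>s. (\<lambda>n. x n s) \<longlonglongrightarrow> L s"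
  shows "(\<lambda>n. F (x n) s) \<longlonglongrightarrow> F L s"
proof -
  define D where "D n = (\<Sum>s'\<in>UNIV. \<bar>x n s' - L s'\<bar>)" for n
  have "D \<longlonglongrightarrow> (\<Sum>s'\<in>(UNIV :: 's set). 0)"
    unfolding D_def by (intro tendsto_sum tendsto_rabs_zero LIM_zero lim)
  then have D0: "D \<longlonglongrightarrow> 0" by simp
  have "\<bar>x n s' - L s'\<bar> \<le> D n" for n s'
    unfolding D_def by (rule member_le_sum) auto
  then have bound: "norm (F (x n) s - F L s) \<le> g * D n" for n
    using contractingD_abs[OF F, of "x n" L "D n" s] by simp
  then have "\<forall>\<^sub>F n in sequentially. norm (F (x n) s - F L s) \<le> g * D n"
    by (intro always_eventually allI)
  moreover have "(\<lambda>n. g * D n) \<longlonglongrightarrow> 0"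
    using tendsto_mult_right_zero[OF D0] by simp
  ultimately have "(\<lambda>n. F (x n) s - F L s) \<longlonglongrightarrow> 0"
    by (rule Lim_null_comparison)
  then show ?thesis by (simp add: LIM_zero_iff)
qed

text \<open>Banach's argument: consecutive iterates differ by at most \<open>g\<^sup>n C\<close>, so the
  telescoping series converges and the iterates have a pointwise limit.\<close>
lemma contracting_iterates_converge:
  fixes F :: "('s::finite \<Rightarrow> real) \<Rightarrow> 's \<Rightarrow> real"
  assumes F: "contracting F g" and g0: "0 \<le> g" and g1: "g < 1"
  shows "\<exists>L. \<forall>s. (\<lambda>n. (F ^^ n) x0 s) \<longlonglongrightarrow> L s"
proof -
  define X where "X n = (F ^^ n) x0" for n
  define C where "C = fmax (\<lambda>s. \<bar>X 1 s - X 0 s\<bar>)"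
  have step: "\<bar>X (Suc n) s - X n s\<bar> \<le> g ^ n * C" for n s
  proof (induction n arbitrary: s)
    case 0
    show ?case using fmax_ge[of "\<lambda>s. \<bar>X 1 s - X 0 s\<bar>"] by (simp add: C_def)
  next
    case (Suc n)
    have "\<bar>F (X (Suc n)) s - F (X n) s\<bar> \<le> g * (g ^ n * C)"
      by (rule contractingD_abs[OF F Suc.IH])
    then show ?case by (simp add: X_def)
  qed
  have summ: "summable (\<lambda>n. X (Suc n) s - X n s)" for s
  proof (rule summable_comparison_test)
    show "\<exists>N. \<forall>n\<ge>N. norm (X (Suc n) s - X n s) \<le> g ^ n * C"
      using step by auto
    show "summable (\<lambda>n. g ^ n * C)"
      using g0 g1 by (intro summable_mult2 summable_geometric) simp
  qed
  define L where "L s = X 0 s + (\<Sum>n. X (Suc n) s - X n s)" for s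
  have "(\<lambda>n. X n s) \<longlonglongrightarrow> L s" for s
  proof -
    have "(\<lambda>n. X 0 s + (\<Sum>i<n. X (Suc i) s - X i s)) \<longlonglongrightarrow> L s"
      unfolding L_def by (intro tendsto_add tendsto_const summable_LIMSEQ summ)
    then show ?thesis
      using sum_lessThan_telescope[of "\<lambda>i. X i s"] by simp
  qed
  then show ?thesis unfolding X_def by blast
qed

lemma contracting_fixpoint_exists:
  fixes F :: "('s::finite \<Rightarrow> real) \<Rightarrow> 's \<Rightarrow> real"
  assumes F: "contracting F g" and g0: "0 \<le> g" and g1: "g < 1"
  shows "\<exists>x. F x = x"
proof -
  obtain L where L: "\<And>s. (\<lambda>n. (F ^^ n) (\<lambda>_. 0) s) \<longlonglongrightarrow> L s"
    using contracting_iterates_converge[OF assms] by blast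
  have "F L s = L s" for s
  proof (rule LIMSEQ_unique)
    show "(\<lambda>n. (F ^^ Suc n) (\<lambda>_. 0) s) \<longlonglongrightarrow> F L s"
      using contracting_tendsto[OF F L] by simp
    show "(\<lambda>n. (F ^^ Suc n) (\<lambda>_. 0) s) \<longlonglongrightarrow> L s"
      using L LIMSEQ_Suc by blast
  qed
  then show ?thesis by blast
qed

text \<open>Hence \<open>v\<^sub>*\<close>, defined by a definite description, really is the fixed point of \<open>T\<close>.\<close>
lemma vopt_fixpoint:
  assumes m: "mdp r p g"
  shows "Topt r p g (vopt r p g) = vopt r p g"
proof -
  have F: "contracting (Topt r p g) g" and g0: "0 \<le> g" and g1: "g < 1"
    using Topt_contracting[OF m] m unfolding mdp_def by auto
  obtain x where x: "Topt r p g x = x"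
    using contracting_fixpoint_exists[OF F g0 g1] by blast
  have "\<exists>!x. Topt r p g x = x"
    using x contracting_fixpoint_unique[OF F g1] by blast
  then show ?thesis unfolding vopt_def by (rule theI')
qed

section \<open>Values of non-stationary policies\<close>

lemma Pprod_stochastic:
  assumes m: "mdp r p g"
  shows "(\<forall>s s'. 0 \<le> Pprod p \<sigma> t s s') \<and> (\<forall>s. (\<Sum>s'\<in>UNIV. Pprod p \<sigma> t s s') = 1)"
proof (induction t)
  case 0
  show ?case by simp
next
  case (Suc t)
  have P0: "\<And>s a s'. 0 \<le> p s a s'" and P1: "\<And>s a. (\<Sum>s'\<in>UNIV. p s a s') = 1"
    using m unfolding mdp_def by auto
  have "0 \<le> Pprod p \<sigma> (Suc t) s s'" for s s'
    using Suc P0 by (simp add: Pmat_def sum_nonneg)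
  moreover have "(\<Sum>s'\<in>UNIV. Pprod p \<sigma> (Suc t) s s') = 1" for s
  proof -
    have "(\<Sum>s'\<in>UNIV. Pprod p \<sigma> (Suc t) s s')
        = (\<Sum>u\<in>UNIV. Pprod p \<sigma> t s u * (\<Sum>s'\<in>UNIV. Pmat p (\<sigma> t) u s'))"
      by (simp only: Pprod.simps sum_distrib_left) (rule sum.swap)
    also have "\<dots> = 1"
      using Suc P1 by (simp add: Pmat_def)
    finally show ?thesis .
  qed
  ultimately show ?case by blast
qed

lemma Pprod_abs_le_one:
  assumes m: "mdp r p g"
  shows "\<bar>Pprod p \<sigma> t s s'\<bar> \<le> 1"
proof -
  have nonneg: "\<And>s'. 0 \<le> Pprod p \<sigma> t s s'" and rows: "(\<Sum>s'\<in>UNIV. Pprod p \<sigma> t s s') = 1"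
    using Pprod_stochastic[OF m] by auto
  have "Pprod p \<sigma> t s s' \<le> (\<Sum>s'\<in>UNIV. Pprod p \<sigma> t s s')"
    by (rule member_le_sum) (use nonneg in auto)
  then show ?thesis using nonneg[of s'] rows by simp
qed

lemma Pprod_Suc_left:
  "Pprod p \<sigma> (Suc t) s s' = (\<Sum>u\<in>UNIV. Pmat p (\<sigma> 0) s u * Pprod p (\<lambda>i. \<sigma> (Suc i)) t u s')"
proof (induction t arbitrary: s')
  case 0
  have "(\<Sum>u\<in>UNIV. (if s = u then 1 else 0) * Pmat p (\<sigma> 0) u s') = Pmat p (\<sigma> 0) s s'"
    "(\<Sum>u\<in>UNIV. Pmat p (\<sigma> 0) s u * (if u = s' then 1 else 0)) = Pmat p (\<sigma> 0) s s'"
    by (simp_all add: if_distrib if_distribR cong: if_cong)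
  then show ?case by simp
next
  case (Suc t)
  have "Pprod p \<sigma> (Suc (Suc t)) s s'
      = (\<Sum>u\<in>UNIV. (\<Sum>w\<in>UNIV. Pmat p (\<sigma> 0) s w * Pprod p (\<lambda>i. \<sigma> (Suc i)) t w u)
                      * Pmat p (\<sigma> (Suc t)) u s')"
    using Suc by simp
  also have "\<dots> = (\<Sum>w\<in>UNIV. Pmat p (\<sigma> 0) s w
                      * (\<Sum>u\<in>UNIV. Pprod p (\<lambda>i. \<sigma> (Suc i)) t w u * Pmat p (\<sigma> (Suc t)) u s'))"
    by (simp only: sum_distrib_left sum_distrib_right mult.assoc) (rule sum.swap)
  finally show ?case by simp
qed

definition vns_term ::
    "('s::finite \<Rightarrow> 'a \<Rightarrow> real) \<Rightarrow> ('s \<Rightarrow> 'a \<Rightarrow> 's \<Rightarrow> real) \<Rightarrow> real \<Rightarrow> (nat \<Rightarrow> 's \<Rightarrow> 'a)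
      \<Rightarrow> 's \<Rightarrow> nat \<Rightarrow> real" where
  "vns_term r p g \<sigma> s t = g ^ t * (\<Sum>s'\<in>UNIV. Pprod p \<sigma> t s s' * r s' (\<sigma> t s'))"

lemma vns_eq_suminf: "vns r p g \<sigma> s = (\<Sum>t. vns_term r p g \<sigma> s t)"
  unfolding vns_def vns_term_def ..

text \<open>The series defining the value converges: its terms are dominated by
  \<open>g\<^sup>t B\<close>, with \<open>B\<close> a bound on all rewards.\<close>
lemma vns_term_summable:
  assumes m: "mdp r p g"
  shows "summable (vns_term r p g \<sigma> s)"
proof (rule summable_comparison_test)
  have g0: "0 \<le> g" and g1: "g < 1" using m unfolding mdp_def by auto
  define B where "B = (\<Sum>s'\<in>UNIV. \<Sum>a\<in>UNIV. \<bar>r s' a\<bar>)"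
  show "summable (\<lambda>t. g ^ t * B)"
    using g0 g1 by (intro summable_mult2 summable_geometric) simp
  have "norm (vns_term r p g \<sigma> s t) \<le> g ^ t * B" for t
  proof -
    have "\<bar>Pprod p \<sigma> t s s' * r s' (\<sigma> t s')\<bar> \<le> (\<Sum>a\<in>UNIV. \<bar>r s' a\<bar>)" for s'
    proof -
      have "\<bar>Pprod p \<sigma> t s s' * r s' (\<sigma> t s')\<bar> \<le> \<bar>r s' (\<sigma> t s')\<bar>"
        using Pprod_abs_le_one[OF m] by (simp add: abs_mult mult_left_le_one_le)
      also have "\<dots> \<le> (\<Sum>a\<in>UNIV. \<bar>r s' a\<bar>)"
        by (rule member_le_sum) auto
      finally show ?thesis .
    qed
    then have "\<bar>\<Sum>s'\<in>UNIV. Pprod p \<sigma> t s s' * r s' (\<sigma> t s')\<bar> \<le> B"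
      unfolding B_def by (intro order_trans[OF sum_abs] sum_mono)
    then show ?thesis
      unfolding vns_term_def using g0 by (simp add: abs_mult mult_left_mono)
  qed
  then show "\<exists>N. \<forall>t\<ge>N. norm (vns_term r p g \<sigma> s t) \<le> g ^ t * B" by blast
qed

lemma vns_bellman:
  assumes m: "mdp r p g"
  shows "vns r p g \<sigma> s = Tpol r p g (\<sigma> 0) (vns r p g (\<lambda>i. \<sigma> (Suc i))) s"
proof -
  define \<sigma>' where "\<sigma>' = (\<lambda>i. \<sigma> (Suc i))"
  define P where "P u = Pmat p (\<sigma> 0) s u" for u
  have head: "vns_term r p g \<sigma> s 0 = r s (\<sigma> 0 s)"
    unfolding vns_term_def by (simp add: if_distrib if_distribR cong: if_cong)
  have tail: "vns_term r p g \<sigma> s (Suc t) = g * (\<Sum>u\<in>UNIV. P u * vns_term r p g \<sigma>' u t)" for t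
  proof -
    have "(\<Sum>s'\<in>UNIV. (\<Sum>u\<in>UNIV. P u * Pprod p \<sigma>' t u s') * r s' (\<sigma>' t s'))
        = (\<Sum>u\<in>UNIV. P u * (\<Sum>s'\<in>UNIV. Pprod p \<sigma>' t u s' * r s' (\<sigma>' t s')))"
      by (simp only: sum_distrib_left sum_distrib_right mult.assoc) (rule sum.swap)
    then show ?thesis
      unfolding vns_term_def Pprod_Suc_left P_def \<sigma>'_def by (simp add: sum_distrib_left mult_ac)
  qed
  have summ: "summable (\<lambda>t. P u * vns_term r p g \<sigma>' u t)" for u
    by (intro summable_mult vns_term_summable[OF m])
  have "vns r p g \<sigma> s = vns_term r p g \<sigma> s 0 + (\<Sum>t. vns_term r p g \<sigma> s (Suc t))"
    unfolding vns_eq_suminf using suminf_split_head[OF vns_term_summable[OF m]] by simp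
  also have "(\<Sum>t. vns_term r p g \<sigma> s (Suc t)) = g * (\<Sum>t. \<Sum>u\<in>UNIV. P u * vns_term r p g \<sigma>' u t)"
    unfolding tail by (rule suminf_mult) (intro summable_sum summ)
  also have "(\<Sum>t. \<Sum>u\<in>UNIV. P u * vns_term r p g \<sigma>' u t) = (\<Sum>u\<in>UNIV. P u * vns r p g \<sigma>' u)"
    unfolding suminf_sum[OF summ] vns_eq_suminf by (simp add: suminf_mult vns_term_summable[OF m])
  finally show ?thesis
    unfolding Tpol_def head P_def \<sigma>'_def by simp
qed

section \<open>Policy chains and the periodic policy\<close>

fun Tchain ::
    "('s::finite \<Rightarrow> 'a \<Rightarrow> real) \<Rightarrow> ('s \<Rightarrow> 'a \<Rightarrow> 's \<Rightarrow> real) \<Rightarrow> real \<Rightarrow> (nat \<Rightarrow> 's \<Rightarrow> 'a)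
      \<Rightarrow> ('s \<Rightarrow> real) \<Rightarrow> nat \<Rightarrow> 's \<Rightarrow> real" where
  "Tchain r p g \<pi> x 0 = x"
| "Tchain r p g \<pi> x (Suc i) = Tpol r p g (\<pi> (Suc i)) (Tchain r p g \<pi> x i)"

text \<open>Applying \<open>T\<^bsub>\<pi> 1\<^esub>, \<dots>, T\<^bsub>\<pi> i\<^esub>\<close> to the value of the periodic policy
  \<open>\<pi> k, \<pi> (k-1), \<dots>, \<pi> 1, \<pi> k, \<dots>\<close> yields the value of its rotation that starts
  with \<open>\<pi> i\<close>; this is the Bellman equation used \<open>i\<close> times.\<close>
lemma Tchain_periodic_value:
  assumes m: "mdp r p g" and k: "1 \<le> k" and i: "i \<le> k"
  shows "Tchain r p g \<pi> (vns r p g (\<lambda>t. \<pi> (k - t mod k))) i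
       = vns r p g (\<lambda>t. \<pi> (k - (t + (k - i)) mod k))"
  using i
proof (induction i)
  case 0
  show ?case by simp
next
  case (Suc i)
  have shift: "(\<lambda>t. \<pi> (k - (Suc t + (k - Suc i)) mod k)) = (\<lambda>t. \<pi> (k - (t + (k - i)) mod k))"
    using Suc.prems by (intro ext) (simp add: Suc_diff_Suc)
  have first: "\<pi> (k - (0 + (k - Suc i)) mod k) = \<pi> (Suc i)"
    using Suc.prems k by simp
  have "vns r p g (\<lambda>t. \<pi> (k - (t + (k - Suc i)) mod k))
      = Tpol r p g (\<pi> (Suc i)) (vns r p g (\<lambda>t. \<pi> (k - (t + (k - i)) mod k)))"
    using vns_bellman[OF m, of "\<lambda>t. \<pi> (k - (t + (k - Suc i)) mod k)"]
    unfolding shift first by (intro ext) simp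
  then show ?case
    using Suc by simp
qed

corollary Tchain_periodic_fixpoint:
  assumes "mdp r p g" and "1 \<le> k"
  shows "Tchain r p g \<pi> (vns r p g (\<lambda>t. \<pi> (k - t mod k))) k = vns r p g (\<lambda>t. \<pi> (k - t mod k))"
  using Tchain_periodic_value[OF assms order_refl] by simp

lemma Tchain_contracting:
  fixes r :: "'s::finite \<Rightarrow> 'a::finite \<Rightarrow> real"
  assumes m: "mdp r p g"
  shows "contracting (\<lambda>x. Tchain r p g \<pi> x i) (g ^ i)"
  unfolding contracting_def
proof (induction i)
  case 0
  show ?case by simp
next
  case (Suc i)
  show ?case
  proof (intro allI impI)
    fix x y :: "'s \<Rightarrow> real" and c s
    assume "\<forall>s. x s - y s \<le> c"
    then have "\<And>s. Tchain r p g \<pi> x i s - Tchain r p g \<pi> y i s \<le> g ^ i * c"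
      using Suc.IH by blast
    then have "Tchain r p g \<pi> x (Suc i) s - Tchain r p g \<pi> y (Suc i) s \<le> g * (g ^ i * c)"
      unfolding Tchain.simps by (rule contractingD[OF Tpol_contracting[OF m]])
    then show "Tchain r p g \<pi> x (Suc i) s - Tchain r p g \<pi> y (Suc i) s \<le> g ^ Suc i * c"
      by (simp add: mult.assoc)
  qed
qed

text \<open>Any policy chain applied to \<open>v\<^sub>*\<close> stays below \<open>v\<^sub>*\<close>, as \<open>T\<^sub>\<pi> v\<^sub>* \<le> T v\<^sub>* = v\<^sub>*\<close>.\<close>
lemma Tchain_vopt_le:
  assumes m: "mdp r p g"
  shows "Tchain r p g \<pi> (vopt r p g) i s \<le> vopt r p g s"
proof (induction i arbitrary: s)
  case 0
  show ?case by simp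
next
  case (Suc i)
  have "Tpol r p g (\<pi> (Suc i)) (Tchain r p g \<pi> (vopt r p g) i) s - Tpol r p g (\<pi> (Suc i)) (vopt r p g) s
      \<le> g * 0"
    using Suc.IH by (intro contractingD[OF Tpol_contracting[OF m]]) simp
  moreover have "Tpol r p g (\<pi> (Suc i)) (vopt r p g) s \<le> vopt r p g s"
    using Topt_ge[of r p g "\<pi> (Suc i)" "vopt r p g" s] vopt_fixpoint[OF m] by simp
  ultimately show ?case by simp
qed

text \<open>A fixed point of a nonempty policy chain (such as the value of the periodic
  policy) lies below \<open>v\<^sub>*\<close>: the minimum \<open>c\<close> of \<open>v\<^sub>* - w\<close> satisfies \<open>c \<ge> g\<^sup>k c\<close>.\<close>
lemma Tchain_fixpoint_le_vopt:
  assumes m: "mdp r p g" and k: "1 \<le> k" and w: "Tchain r p g \<pi> w k = w"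
  shows "w s \<le> vopt r p g s"
proof -
  define d where "d s = vopt r p g s - w s" for s
  define c where "c = fmin d"
  have g0: "0 \<le> g" and g1: "g < 1" using m unfolding mdp_def by auto
  then have gk1: "g ^ k < 1" using k by (simp add: power_less_one_iff)
  obtain s0 where s0: "c = d s0"
    unfolding c_def using fmin_attained by blast
  have "g ^ k * c \<le> Tchain r p g \<pi> (vopt r p g) k s0 - Tchain r p g \<pi> w k s0"
    using fmin_le[of d] unfolding c_def d_def
    by (intro contractingD_lower[OF Tchain_contracting[OF m]]) simp
  also have "\<dots> \<le> c"
    using Tchain_vopt_le[OF m, of \<pi> k s0] w s0 unfolding d_def by simp
  finally have "0 \<le> c * (1 - g ^ k)" by (simp add: algebra_simps)
  with gk1 have "0 \<le> c" by (simp add: zero_le_mult_iff)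
  then show ?thesis
    using fmin_le[of d s] unfolding c_def d_def by linarith
qed

lemma linear_recurrence_bound:
  fixes X :: "nat \<Rightarrow> real"
  assumes g0: "0 \<le> g" and g1: "g < 1" and rec: "\<And>j. j < n \<Longrightarrow> X (Suc j) \<le> g * X j + c"
  shows "X n \<le> g ^ n * X 0 + c * (1 - g ^ n) / (1 - g)"
  using rec
proof (induction n)
  case 0
  show ?case by simp
next
  case (Suc n)
  then have "X n \<le> g ^ n * X 0 + c * (1 - g ^ n) / (1 - g)" by simp
  then have "g * X n \<le> g * (g ^ n * X 0 + c * (1 - g ^ n) / (1 - g))"
    using g0 by (rule mult_left_mono)
  with Suc.prems[of n] have "X (Suc n) \<le> g * (g ^ n * X 0 + c * (1 - g ^ n) / (1 - g)) + c"
    by simp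
  also have "\<dots> = g ^ Suc n * X 0 + c * (1 - g ^ Suc n) / (1 - g)"
    using g1 by (simp add: field_simps)
  finally show ?case .
qed

text \<open>Solving the self-referential bound on \<open>M = \<parallel>v\<^sub>* - v\<^sub>\<pi>\<^sub>k\<^sub>,\<^sub>k\<parallel>\<close> that the error
  propagation analysis produces.\<close>
lemma self_bound_solve:
  fixes g c S M :: real
  assumes g0: "0 \<le> g" and g1: "g < 1" and k: "1 \<le> k"
    and M: "M \<le> g ^ k * (S + M) + c * (g - g ^ k) / (1 - g)"
  shows "M \<le> (g / (1 - g) - g ^ k / (1 - g ^ k)) * c + g ^ k / (1 - g ^ k) * S"
proof -
  have gk1: "g ^ k < 1" using g0 g1 k by (simp add: power_less_one_iff)
  from M have "M * (1 - g ^ k) \<le> g ^ k * S + c * (g - g ^ k) / (1 - g)"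
    by (simp add: algebra_simps)
  then have "M \<le> (g ^ k * S + c * (g - g ^ k) / (1 - g)) / (1 - g ^ k)"
    using gk1 by (simp add: pos_le_divide_eq)
  also have "\<dots> = g ^ k / (1 - g ^ k) * S + (g - g ^ k) / ((1 - g) * (1 - g ^ k)) * c"
    by (simp add: add_divide_distrib divide_divide_eq_left)
  also have "(g - g ^ k) / ((1 - g) * (1 - g ^ k)) = g / (1 - g) - g ^ k / (1 - g ^ k)"
    using g1 gk1 by (simp add: field_simps)
  finally show ?thesis by linarith
qed

section \<open>Error propagation in Approximate Value Iteration\<close>

locale avi =
  fixes r :: "'s::finite \<Rightarrow> 'a::finite \<Rightarrow> real"
    and p :: "'s \<Rightarrow> 'a \<Rightarrow> 's \<Rightarrow> real"
    and g :: real
    and v :: "nat \<Rightarrow> 's \<Rightarrow> real"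
    and \<pi> :: "nat \<Rightarrow> 's \<Rightarrow> 'a"
    and e :: "nat \<Rightarrow> 's \<Rightarrow> real"
    and k :: nat
  assumes mdp: "mdp r p g"
    and greedy: "\<And>j. j < k \<Longrightarrow> greedy r p g (\<pi> (Suc j)) (v j)"
    and step: "\<And>j. Suc j < k \<Longrightarrow> v (Suc j) = (\<lambda>s. Tpol r p g (\<pi> (Suc j)) (v j) s + e (Suc j) s)"
begin

lemma g_nonneg: "0 \<le> g" and g_less_one: "g < 1"
  using mdp unfolding mdp_def by auto

definition gap :: "('s \<Rightarrow> real) \<Rightarrow> nat \<Rightarrow> real" where
  "gap x j = fmax (\<lambda>s. vopt r p g s - v j s) + fmax (\<lambda>s. v j s - Tchain r p g \<pi> x j s)"

text \<open>Splitting \<open>v\<^sub>* - T\<^bsub>\<pi>\<^sub>j\<^sub>+\<^sub>1\<^esub> (Tchain x j)\<close> at \<open>T\<^bsub>\<pi>\<^sub>j\<^sub>+\<^sub>1\<^esub> v\<^sub>j = T v\<^sub>j\<close>; both parts contract by \<open>g\<close>.\<close>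
lemma opt_minus_Tchain:
  assumes j: "j < k"
  shows "vopt r p g s - Tchain r p g \<pi> x (Suc j) s \<le> g * gap x j"
proof -
  have "Topt r p g (vopt r p g) s - Topt r p g (v j) s \<le> g * fmax (\<lambda>s. vopt r p g s - v j s)"
    by (rule contractingD[OF Topt_contracting[OF mdp]]) (rule fmax_ge)
  moreover have "Tpol r p g (\<pi> (Suc j)) (v j) s - Tchain r p g \<pi> x (Suc j) s
      \<le> g * fmax (\<lambda>s. v j s - Tchain r p g \<pi> x j s)"
    unfolding Tchain.simps by (rule contractingD[OF Tpol_contracting[OF mdp]]) (rule fmax_ge)
  moreover have "Tpol r p g (\<pi> (Suc j)) (v j) = Topt r p g (v j)"
    using greedy[OF j] unfolding greedy_def .
  ultimately show ?thesis
    unfolding gap_def vopt_fixpoint[OF mdp] by (simp add: algebra_simps)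
qed

text \<open>One AVI step contracts the gap by \<open>g\<close> and adds the span of the error: the error
  lowers the first part by at least its minimum and raises the second by at most its maximum.\<close>
lemma gap_step:
  assumes j: "Suc j < k"
  shows "gap x (Suc j) \<le> g * gap x j + span (e (Suc j))"
proof -
  have v: "v (Suc j) s = Tpol r p g (\<pi> (Suc j)) (v j) s + e (Suc j) s" for s
    using step[OF j] by simp
  have "fmax (\<lambda>s. vopt r p g s - v (Suc j) s) \<le> g * fmax (\<lambda>s. vopt r p g s - v j s) - fmin (e (Suc j))"
  proof (rule fmax_leI)
    fix s
    have "Topt r p g (vopt r p g) s - Topt r p g (v j) s \<le> g * fmax (\<lambda>s. vopt r p g s - v j s)"
      by (rule contractingD[OF Topt_contracting[OF mdp]]) (rule fmax_ge)
    moreover have "Tpol r p g (\<pi> (Suc j)) (v j) = Topt r p g (v j)"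
      using greedy j unfolding greedy_def by simp
    ultimately show "vopt r p g s - v (Suc j) s \<le> g * fmax (\<lambda>s. vopt r p g s - v j s) - fmin (e (Suc j))"
      using v[of s] fmin_le[of "e (Suc j)" s] unfolding vopt_fixpoint[OF mdp] by simp
  qed
  moreover have "fmax (\<lambda>s. v (Suc j) s - Tchain r p g \<pi> x (Suc j) s)
      \<le> g * fmax (\<lambda>s. v j s - Tchain r p g \<pi> x j s) + fmax (e (Suc j))"
  proof (rule fmax_leI)
    fix s
    have "Tpol r p g (\<pi> (Suc j)) (v j) s - Tchain r p g \<pi> x (Suc j) s
        \<le> g * fmax (\<lambda>s. v j s - Tchain r p g \<pi> x j s)"
      unfolding Tchain.simps by (rule contractingD[OF Tpol_contracting[OF mdp]]) (rule fmax_ge)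
    then show "v (Suc j) s - Tchain r p g \<pi> x (Suc j) s
        \<le> g * fmax (\<lambda>s. v j s - Tchain r p g \<pi> x j s) + fmax (e (Suc j))"
      using v[of s] fmax_ge[of "e (Suc j)" s] by simp
  qed
  ultimately show ?thesis
    unfolding gap_def span_fmax_fmin by (simp add: algebra_simps)
qed

text \<open>Initially the chain is \<open>x\<close> itself, and \<open>v\<^sub>0 - x = (v\<^sub>* - x) - (v\<^sub>* - v\<^sub>0)\<close>.\<close>
lemma gap_initial:
  "gap x 0 \<le> span (\<lambda>s. vopt r p g s - v 0 s) + fmax (\<lambda>s. vopt r p g s - x s)"
proof -
  have "fmax (\<lambda>s. v 0 s - x s) \<le> fmax (\<lambda>s. vopt r p g s - x s) - fmin (\<lambda>s. vopt r p g s - v 0 s)"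
  proof (rule fmax_leI)
    fix s
    show "v 0 s - x s \<le> fmax (\<lambda>s. vopt r p g s - x s) - fmin (\<lambda>s. vopt r p g s - v 0 s)"
      using fmax_ge[of "\<lambda>s. vopt r p g s - x s" s] fmin_le[of "\<lambda>s. vopt r p g s - v 0 s" s]
      by linarith
  qed
  then show ?thesis
    unfolding gap_def span_fmax_fmin by simp
qed

text \<open>The main estimate: if \<open>w\<close> is a fixed point of \<open>T\<^bsub>\<pi> k\<^esub> \<dots> T\<^bsub>\<pi> 1\<^esub>\<close> and all error
  spans are at most \<open>\<epsilon>\<close>, then \<open>M = max (v\<^sub>* - w)\<close> satisfies
  \<open>M \<le> g (g\<^sup>k\<^sup>-\<^sup>1 gap\<^sub>0 + \<epsilon>(1 - g\<^sup>k\<^sup>-\<^sup>1)/(1 - g))\<close> with \<open>gap\<^sub>0 \<le> span (v\<^sub>* - v\<^sub>0) + M\<close>.\<close>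
lemma fixpoint_gap_bound:
  assumes k: "1 \<le> k" and w: "Tchain r p g \<pi> w k = w"
    and eps: "\<And>j. 1 \<le> j \<Longrightarrow> j < k \<Longrightarrow> span (e j) \<le> \<epsilon>"
  shows "fmax (\<lambda>s. vopt r p g s - w s)
      \<le> (g / (1 - g) - g ^ k / (1 - g ^ k)) * \<epsilon> + g ^ k / (1 - g ^ k) * span (\<lambda>s. vopt r p g s - v 0 s)"
proof -
  obtain K where K: "k = Suc K" using k by (cases k) auto
  define M where "M = fmax (\<lambda>s. vopt r p g s - w s)"
  define S where "S = span (\<lambda>s. vopt r p g s - v 0 s)"
  have wK: "Tchain r p g \<pi> w (Suc K) = w"
    using w K by simp
  have M: "M \<le> g * gap w K"
    unfolding M_def using opt_minus_Tchain[of K _ w] K unfolding wK by (intro fmax_leI) simp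
  have rec: "gap w K \<le> g ^ K * gap w 0 + \<epsilon> * (1 - g ^ K) / (1 - g)"
  proof (rule linear_recurrence_bound[OF g_nonneg g_less_one])
    fix j assume "j < K"
    then show "gap w (Suc j) \<le> g * gap w j + \<epsilon>"
      using gap_step[of j w] eps[of "Suc j"] K by simp
  qed
  have "gap w 0 \<le> S + M"
    unfolding S_def M_def by (rule gap_initial)
  then have "g ^ K * gap w 0 \<le> g ^ K * (S + M)"
    by (simp add: mult_left_mono g_nonneg)
  with rec have "gap w K \<le> g ^ K * (S + M) + \<epsilon> * (1 - g ^ K) / (1 - g)"
    by linarith
  then have "g * gap w K \<le> g * (g ^ K * (S + M) + \<epsilon> * (1 - g ^ K) / (1 - g))"
    by (rule mult_left_mono) (rule g_nonneg)
  with M have "M \<le> g * (g ^ K * (S + M) + \<epsilon> * (1 - g ^ K) / (1 - g))"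
    by linarith
  also have "\<dots> = g ^ k * (S + M) + \<epsilon> * (g - g ^ k) / (1 - g)"
    unfolding K by (simp add: algebra_simps add_divide_distrib)
  finally show ?thesis
    unfolding M_def S_def by (rule self_bound_solve[OF g_nonneg g_less_one k])
qed

end

theorem mainTheorem4:
  fixes r :: "'s::finite \<Rightarrow> 'a::finite \<Rightarrow> real"
    and p :: "'s \<Rightarrow> 'a \<Rightarrow> 's \<Rightarrow> real"
    and g :: real
    and v :: "nat \<Rightarrow> 's \<Rightarrow> real"
    and \<pi> :: "nat \<Rightarrow> 's \<Rightarrow> 'a"
    and e :: "nat \<Rightarrow> 's \<Rightarrow> real"
    and k :: nat
  assumes "mdp r p g"
    and "k \<ge> 1"
    and "\<And>j. j < k \<Longrightarrow> greedy r p g (\<pi> (Suc j)) (v j)"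
    and "\<And>j. Suc j < k \<Longrightarrow> v (Suc j) = (\<lambda>s. Tpol r p g (\<pi> (Suc j)) (v j) s + e (Suc j) s)"
  shows "supnorm (\<lambda>s. vopt r p g s - vns r p g (\<lambda>t. \<pi> (k - t mod k)) s)
     \<le> (g / (1 - g) - g ^ k / (1 - g ^ k))
         * (if k = 1 then 0 else Max ((\<lambda>j. span (e j)) ` {1..<k}))
       + g ^ k / (1 - g ^ k) * span (\<lambda>s. vopt r p g s - v 0 s)"
proof -
  interpret avi r p g v \<pi> e k
    using assms(1,3,4) by unfold_locales
  define w where "w = vns r p g (\<lambda>t. \<pi> (k - t mod k))"
  define \<epsilon> where "\<epsilon> = (if k = 1 then 0 else Max ((\<lambda>j. span (e j)) ` {1..<k}))"
  have w: "Tchain r p g \<pi> w k = w"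
    unfolding w_def by (rule Tchain_periodic_fixpoint[OF assms(1,2)])
  have eps: "span (e j) \<le> \<epsilon>" if "1 \<le> j" "j < k" for j
    using that unfolding \<epsilon>_def by (auto intro: Max_ge)
  have "supnorm (\<lambda>s. vopt r p g s - w s) = fmax (\<lambda>s. vopt r p g s - w s)"
    using Tchain_fixpoint_le_vopt[OF assms(1,2) w] by (intro supnorm_nonneg) simp
  also have "\<dots> \<le> (g / (1 - g) - g ^ k / (1 - g ^ k)) * \<epsilon>
      + g ^ k / (1 - g ^ k) * span (\<lambda>s. vopt r p g s - v 0 s)"
    by (rule fixpoint_gap_bound[OF assms(2) w eps])
  finally show ?thesis
    unfolding w_def \<epsilon>_def .
qed

end
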